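(* Let $n$ be an odd integer and $k\ge 1$ an integer with $2^k<n<2^{k+1}$, and set $a=n-2^k$. Then there is an orientation of the $n$-cube in which every vertex has in-degree $a$ or $n$.
   Context: The $n$-cube is the graph on binary $n$-tuples with edges between tuples differing in exactly one coordinate. An orientation assigns a direction to each edge; the in-degree of a vertex is the number of edges directed into it. *)

theory Defs
  imports Main
begin

definition cube_vertices :: "nat \<Rightarrow> bool list set" where
  "cube_vertices n = {xs. length xs = n}"

definition cube_adj :: "nat \<Rightarrow> bool list \<Rightarrow> bool list \<Rightarrow> bool" where
  "cube_adj n u v \<longleftrightarrow> u \<in> cube_vertices n \<and> v \<in> cube_vertices n
      \<and> card {i. i < n \<and> u ! i \<noteq> v ! i} = 1"

text \<open>An orientation: a relation D (D u v means the edge is directed from u to v)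
  supported on the edges, choosing exactly one direction for every edge.\<close>
definition is_cube_orientation :: "nat \<Rightarrow> (bool list \<Rightarrow> bool list \<Rightarrow> bool) \<Rightarrow> bool" where
  "is_cube_orientation n D \<longleftrightarrow>
     (\<forall>u v. D u v \<longrightarrow> cube_adj n u v) \<and>
     (\<forall>u v. cube_adj n u v \<longrightarrow> (D u v \<or> D v u) \<and> \<not> (D u v \<and> D v u))"

definition in_degree :: "nat \<Rightarrow> (bool list \<Rightarrow> bool list \<Rightarrow> bool) \<Rightarrow> bool list \<Rightarrow> nat" where
  "in_degree n D v = card {u \<in> cube_vertices n. D u v}"

end

theory Submission
  imports Defs
begin

text \<open>
  Write n = a + 2^k with a < 2^k. The cube is bipartite by the parity of the number of
  ones, and an orientation is specified by saying, for every even vertex w and direction i,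
  whether the edge between w and its i-th neighbour points away from w (predicate Out).
  Every such choice is an orientation; even vertices then have in-degree
  #{i. not Out w i} and odd vertices v have in-degree #{i. Out (flip v i) i}.

  We label each vertex by the XOR of the numbers i - a over the coordinates i >= a in
  which it has a one; flipping coordinate i >= a XORs the label with i - a, and all labels
  are below 2^k. Let an even vertex send out exactly its edges in directions i >= a when
  its label is below a. Even vertices then get in-degree a or n. For an odd vertex v with
  label c, the incoming edges are the directions i >= a with (i - a) XOR c < a; as XOR with
  c permutes {0..<2^k}, there are exactly a of them. The argument only uses
  a \<le> 2^k.
\<close>

definition flip :: "bool list \<Rightarrow> nat \<Rightarrow> bool list" where
  "flip u i = u[i := \<not> u ! i]"

lemma length_flip [simp]: "length (flip u i) = length u"
  by (simp add: flip_def)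

lemma flip_nth: "i < length u \<Longrightarrow> flip u i ! j = (if j = i then \<not> u ! i else u ! j)"
  by (simp add: flip_def)

lemma flip_flip [simp]: "flip (flip u i) i = u"
  by (cases "i < length u") (simp_all add: flip_def list_update_beyond)

lemma flip_inj: "i < length u \<Longrightarrow> j < length u \<Longrightarrow> flip u i = flip u j \<Longrightarrow> i = j"
  by (metis flip_nth)

lemma cube_adj_iff_flip: "cube_adj n u v \<longleftrightarrow> length v = n \<and> (\<exists>i<n. u = flip v i)"
proof
  assume "cube_adj n u v"
  hence lu: "length u = n" and lv: "length v = n"
    and "card {i. i < n \<and> u ! i \<noteq> v ! i} = 1"
    by (auto simp: cube_adj_def cube_vertices_def)
  then obtain i where diff: "{i. i < n \<and> u ! i \<noteq> v ! i} = {i}"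
    using card_1_singletonE by blast
  hence i: "i < n" by auto
  have "u = flip v i"
  proof (rule nth_equalityI)
    show "length u = length (flip v i)" using lu lv by simp
    fix j assume "j < length u"
    thus "u ! j = flip v i ! j" using diff i lu lv by (auto simp: flip_nth)
  qed
  thus "length v = n \<and> (\<exists>i<n. u = flip v i)" using i lv by blast
next
  assume "length v = n \<and> (\<exists>i<n. u = flip v i)"
  then obtain i where lv: "length v = n" and i: "i < n" and u: "u = flip v i" by blast
  have "{j. j < n \<and> u ! j \<noteq> v ! j} = {i}" using i lv u by (auto simp: flip_nth)
  thus "cube_adj n u v" using lv u by (simp add: cube_adj_def cube_vertices_def)
qed

lemma in_degree_directions:
  assumes supp: "\<forall>u v. D u v \<longrightarrow> cube_adj n u v" and v: "length v = n"
  shows "in_degree n D v = card {i. i < n \<and> D (flip v i) v}"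
proof -
  have "{u \<in> cube_vertices n. D u v} = flip v ` {i. i < n \<and> D (flip v i) v}"
  proof safe
    fix u assume "D u v"
    then obtain i where "i < n" "u = flip v i" using supp cube_adj_iff_flip by blast
    with \<open>D u v\<close> show "u \<in> flip v ` {i. i < n \<and> D (flip v i) v}" by blast
  qed (use v in \<open>simp_all add: cube_vertices_def\<close>)
  moreover have "inj_on (flip v) {i. i < n \<and> D (flip v i) v}"
    using v flip_inj by (auto intro: inj_onI)
  ultimately show ?thesis by (simp add: in_degree_def card_image)
qed

fun parity :: "bool list \<Rightarrow> bool" where
  "parity [] = False"
| "parity (b # bs) = (b \<noteq> parity bs)"

lemma parity_flip: "i < length u \<Longrightarrow> parity (flip u i) = (\<not> parity u)"
proof (induction u arbitrary: i)
  case (Cons b bs)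
  thus ?case by (cases i) (simp_all add: flip_def)
qed simp

text \<open>The edge between an even vertex w and flip w i points away from w iff Out w i.\<close>
definition even_choice_orientation ::
  "nat \<Rightarrow> (bool list \<Rightarrow> nat \<Rightarrow> bool) \<Rightarrow> bool list \<Rightarrow> bool list \<Rightarrow> bool" where
  "even_choice_orientation n Out u v \<longleftrightarrow> length v = n \<and>
     (\<exists>i<n. u = flip v i \<and> (if parity u then \<not> Out v i else Out u i))"

lemma even_choice_orientation_flip:
  assumes "length v = n" and "i < n"
  shows "even_choice_orientation n Out (flip v i) v \<longleftrightarrow>
           (if parity v then Out (flip v i) i else \<not> Out v i)"
proof -
  have "(\<exists>j<n. flip v i = flip v j \<and> Q j) \<longleftrightarrow> Q i" for Q
    using assms flip_inj[of i v] by metis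
  thus ?thesis
    using assms parity_flip[of i v] by (simp add: even_choice_orientation_def)
qed

lemma is_orientation_even_choice: "is_cube_orientation n (even_choice_orientation n Out)"
  unfolding is_cube_orientation_def
proof (intro conjI allI impI)
  fix u v assume "even_choice_orientation n Out u v"
  thus "cube_adj n u v" unfolding even_choice_orientation_def cube_adj_iff_flip by blast
next
  fix u v assume "cube_adj n u v"
  then obtain i where lv: "length v = n" and i: "i < n" and u: "u = flip v i"
    unfolding cube_adj_iff_flip by blast
  have lu: "length u = n" and v: "v = flip u i" using lv u by auto
  have "even_choice_orientation n Out u v \<longleftrightarrow> (if parity v then Out u i else \<not> Out v i)"
    using even_choice_orientation_flip[OF lv i] u by simp
  moreover have "even_choice_orientation n Out v u \<longleftrightarrow>
                   (if parity u then Out v i else \<not> Out u i)"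
    using even_choice_orientation_flip[OF lu i] v by simp
  moreover have "parity u = (\<not> parity v)" using u parity_flip i lv by simp
  ultimately show "even_choice_orientation n Out u v \<or> even_choice_orientation n Out v u"
    and "\<not> (even_choice_orientation n Out u v \<and> even_choice_orientation n Out v u)"
    by (cases "parity v"; simp)+
qed

lemma in_degree_even_choice:
  assumes "length v = n"
  shows "in_degree n (even_choice_orientation n Out) v =
           (if parity v then card {i. i < n \<and> Out (flip v i) i}
            else card {i. i < n \<and> \<not> Out v i})"
proof -
  have supp: "\<forall>u v. even_choice_orientation n Out u v \<longrightarrow> cube_adj n u v"
    using is_orientation_even_choice unfolding is_cube_orientation_def by blast
  have "{i. i < n \<and> even_choice_orientation n Out (flip v i) v} =
        (if parity v then {i. i < n \<and> Out (flip v i) i} else {i. i < n \<and> \<not> Out v i})"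
    using even_choice_orientation_flip[OF assms] by (cases "parity v") (simp_all cong: conj_cong)
  thus ?thesis by (simp add: in_degree_directions[OF supp assms])
qed

lemma xor_less_power: "(x::nat) < 2 ^ k \<Longrightarrow> y < 2 ^ k \<Longrightarrow> xor x y < 2 ^ k"
  by (metis take_bit_nat_eq_self_iff take_bit_xor)

lemma xor_xor_cancel [simp]: "xor (xor (m::nat) c) c = m"
  by (simp add: xor.assoc)

text \<open>XOR with a fixed c < 2^k permutes {..<2^k}, so it takes exactly a values into
  {..<a} for every a \<le> 2^k.\<close>
lemma card_xor_below:
  assumes c: "(c::nat) < 2 ^ k" and a: "a \<le> 2 ^ k"
  shows "card {m. m < 2 ^ k \<and> xor m c < a} = a"
proof -
  have "{m. m < 2 ^ k \<and> xor m c < a} = (\<lambda>m. xor m c) ` {..<a}"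
  proof (intro set_eqI iffI)
    fix m assume "m \<in> {m. m < 2 ^ k \<and> xor m c < a}"
    hence "m = xor (xor m c) c" and "xor m c < a" by simp_all
    thus "m \<in> (\<lambda>m. xor m c) ` {..<a}" by blast
  next
    fix m assume "m \<in> (\<lambda>m. xor m c) ` {..<a}"
    then obtain l where "l < a" and "m = xor l c" by auto
    thus "m \<in> {m. m < 2 ^ k \<and> xor m c < a}" using xor_less_power[OF _ c] a by simp
  qed
  moreover have "inj_on (\<lambda>m. xor m c) {..<a}"
    by (rule inj_onI) (metis xor_xor_cancel)
  ultimately show ?thesis by (simp add: card_image)
qed

text \<open>xor_label a j bs is the XOR of the numbers j + i - a over the positions i where
  bs has a one (positions with j + i \<le> a contribute 0).\<close>
fun xor_label :: "nat \<Rightarrow> nat \<Rightarrow> bool list \<Rightarrow> nat" where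
  "xor_label a j [] = 0"
| "xor_label a j (b # bs) =
     (if b then xor (j - a) (xor_label a (Suc j) bs) else xor_label a (Suc j) bs)"

lemma xor_label_flip:
  "i < length bs \<Longrightarrow> xor_label a j (flip bs i) = xor (j + i - a) (xor_label a j bs)"
proof (induction bs arbitrary: j i)
  case (Cons b bs)
  thus ?case by (cases i) (auto simp: flip_def xor.left_commute xor.assoc[symmetric])
qed simp

text \<open>All terms are below 2^k, hence so is the label.\<close>
lemma xor_label_less:
  "j + length bs \<le> a + 2 ^ k \<Longrightarrow> xor_label a j bs < 2 ^ k"
proof (induction bs arbitrary: j)
  case (Cons b bs)
  hence "j < a + 2 ^ k" by simp
  hence "j - a < 2 ^ k" by (cases "a \<le> j") (simp_all add: less_diff_conv2 add.commute)
  with Cons show ?case by (simp add: xor_less_power)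
qed simp

lemma card_shifted:
  "card {i. i < a + m \<and> a \<le> i \<and> P (i - a)} = card {l::nat. l < m \<and> P l}"
proof -
  have "{i. i < a + m \<and> a \<le> i \<and> P (i - a)} = (\<lambda>l. a + l) ` {l. l < m \<and> P l}"
  proof safe
    fix i assume "i < a + m" "a \<le> i" "P (i - a)"
    thus "i \<in> (\<lambda>l. a + l) ` {l. l < m \<and> P l}" by (intro image_eqI[of _ _ "i - a"]) auto
  qed auto
  thus ?thesis by (simp add: card_image)
qed

definition label_orientation :: "nat \<Rightarrow> nat \<Rightarrow> bool list \<Rightarrow> bool list \<Rightarrow> bool" where
  "label_orientation a n = even_choice_orientation n (\<lambda>w i. xor_label a 0 w < a \<and> a \<le> i)"

lemma in_degree_label_orientation:
  assumes "a \<le> 2 ^ k" and v: "length v = a + 2 ^ k"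
  shows "in_degree (a + 2 ^ k) (label_orientation a (a + 2 ^ k)) v \<in> {a, a + 2 ^ k}"
proof (cases "parity v")
  case True
  define c where "c = xor_label a 0 v"
  have c: "c < 2 ^ k" using xor_label_less[of 0 v a k] v by (simp add: c_def)
  have "{i. i < a + 2 ^ k \<and> xor_label a 0 (flip v i) < a \<and> a \<le> i} =
        {i. i < a + 2 ^ k \<and> a \<le> i \<and> xor (i - a) c < a}"
    using v xor_label_flip[of _ v a 0] by (auto simp: c_def)
  thus ?thesis
    using True in_degree_even_choice[OF v] card_xor_below[OF c assms(1)]
      card_shifted[of a "2 ^ k" "\<lambda>l. xor l c < a"]
    by (simp add: label_orientation_def)
next
  case False
  have "{i. i < a + 2 ^ k \<and> \<not> (xor_label a 0 v < a \<and> a \<le> i)} =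
        (if xor_label a 0 v < a then {..<a} else {..<a + 2 ^ k})"
    by auto
  thus ?thesis using False in_degree_even_choice[OF v] by (simp add: label_orientation_def)
qed

theorem mainTheorem5:
  fixes n k :: nat
  assumes "odd n" and "k \<ge> 1" and "2 ^ k < n" and "n < 2 ^ (k + 1)"
  shows "\<exists>D. is_cube_orientation n D \<and>
           (\<forall>v \<in> cube_vertices n. in_degree n D v = n - 2 ^ k \<or> in_degree n D v = n)"
proof -
  define a where "a = n - 2 ^ k"
  have n: "n = a + 2 ^ k" and "a \<le> 2 ^ k" using assms(3,4) by (auto simp: a_def)
  hence "\<forall>v \<in> cube_vertices n. in_degree n (label_orientation a n) v \<in> {a, n}"
    using in_degree_label_orientation by (simp add: cube_vertices_def)
  moreover have "is_cube_orientation n (label_orientation a n)"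
    by (simp add: label_orientation_def is_orientation_even_choice)
  ultimately show ?thesis unfolding a_def by blast
qed

end
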